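(* Let $\boldsymbol\pi\in H_{1,2,2}$ be a primary prime quaternion and $p=N(\boldsymbol\pi)$. Then the p-conjugate $\overline{\boldsymbol\pi}_p$ equals $\overline{\boldsymbol\pi}$ if $p\equiv1\pmod4$ and equals $-\overline{\boldsymbol\pi}$ if $p\equiv-1\pmod4$.
   Context: Let $\mathbf{i},\mathbf{j},\mathbf{k}$ be the standard quaternion units; $\overline{\mathbf{q}}$ is quaternion conjugation and $N(\mathbf{q})=\mathbf{q}\overline{\mathbf{q}}$. $H_{1,2,2}$ is the subring of the quaternions equal to the $\mathbb{Z}$-module generated by $\mathbf{v}_1=1$, $\mathbf{v}_2=\mathbf{i}$, $\mathbf{v}_3=\tfrac12(1+\mathbf{i}+\sqrt2\,\mathbf{j})$, $\mathbf{v}_4=\tfrac12(1+\mathbf{i}+\sqrt2\,\mathbf{k})$. A prime of $H_{1,2,2}$ is a nonzero non-invertible element $\boldsymbol\pi$ such that any factorization $\boldsymbol\pi=\mathbf{a}\mathbf{b}$ in $H_{1,2,2}$ has $\mathbf{a}$ or $\mathbf{b}$ invertible. Let $I=2(1+\mathbf{i})H_{1,2,2}$ (equal to $H_{1,2,2}\,2(1+\mathbf{i})$). An element $\mathbf{q}\in H_{1,2,2}$ is primary if $\mathbf{q}-1\in I$ or $\mathbf{q}-(1+2\mathbf{v}_3)\in I$. For a primary prime $\boldsymbol\pi$, its p-conjugate is $\overline{\boldsymbol\pi}_p=\overline{\boldsymbol\pi}$ if $\boldsymbol\pi-1\in I$ and $\overline{\boldsymbol\pi}_p=-\overline{\boldsymbol\pi}$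 if $\boldsymbol\pi-(1+2\mathbf{v}_3)\in I$. *)

theory Defs
  imports Complex_Main "HOL-Number_Theory.Cong"
begin

datatype quat = Quat (Re: real) (Im1: real) (Im2: real) (Im3: real)

definition qadd :: "quat \<Rightarrow> quat \<Rightarrow> quat" where
  "qadd x y = Quat (Re x + Re y) (Im1 x + Im1 y) (Im2 x + Im2 y) (Im3 x + Im3 y)"

definition qsub :: "quat \<Rightarrow> quat \<Rightarrow> quat" where
  "qsub x y = Quat (Re x - Re y) (Im1 x - Im1 y) (Im2 x - Im2 y) (Im3 x - Im3 y)"

definition qneg :: "quat \<Rightarrow> quat" where
  "qneg x = Quat (- Re x) (- Im1 x) (- Im2 x) (- Im3 x)"

definition qscale :: "real \<Rightarrow> quat \<Rightarrow> quat" where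
  "qscale r x = Quat (r * Re x) (r * Im1 x) (r * Im2 x) (r * Im3 x)"

text \<open>Hamilton product (i^2 = j^2 = k^2 = ijk = -1).\<close>
definition qmult :: "quat \<Rightarrow> quat \<Rightarrow> quat" where
  "qmult x y = Quat
     (Re x * Re y - Im1 x * Im1 y - Im2 x * Im2 y - Im3 x * Im3 y)
     (Re x * Im1 y + Im1 x * Re y + Im2 x * Im3 y - Im3 x * Im2 y)
     (Re x * Im2 y - Im1 x * Im3 y + Im2 x * Re y + Im3 x * Im1 y)
     (Re x * Im3 y + Im1 x * Im2 y - Im2 x * Im1 y + Im3 x * Re y)"

definition qconj :: "quat \<Rightarrow> quat" where
  "qconj x = Quat (Re x) (- Im1 x) (- Im2 x) (- Im3 x)"

definition qone :: quat where "qone = Quat 1 0 0 0"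
definition qzero :: quat where "qzero = Quat 0 0 0 0"
definition qi :: quat where "qi = Quat 0 1 0 0"
definition qj :: quat where "qj = Quat 0 0 1 0"
definition qk :: quat where "qk = Quat 0 0 0 1"

text \<open>Norm N(q) = q * conj q (a real quaternion); we record its real part.\<close>
definition qnorm :: "quat \<Rightarrow> real" where
  "qnorm q = Re (qmult q (qconj q))"

definition v1 :: quat where "v1 = qone"
definition v2 :: quat where "v2 = qi"
definition v3 :: quat where "v3 = qscale (1/2) (qadd (qadd qone qi) (qscale (sqrt 2) qj))"
definition v4 :: quat where "v4 = qscale (1/2) (qadd (qadd qone qi) (qscale (sqrt 2) qk))"

definition H122 :: "quat set" where
  "H122 = {qadd (qadd (qscale (of_int a) v1) (qscale (of_int b) v2))
                (qadd (qscale (of_int c) v3) (qscale (of_int d) v4)) | a b c d :: int. True}"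

definition H_unit :: "quat \<Rightarrow> bool" where
  "H_unit u \<longleftrightarrow> u \<in> H122 \<and> (\<exists>w \<in> H122. qmult u w = qone \<and> qmult w u = qone)"

definition H_prime :: "quat \<Rightarrow> bool" where
  "H_prime p \<longleftrightarrow> p \<in> H122 \<and> p \<noteq> qzero \<and> \<not> H_unit p \<and>
     (\<forall>a \<in> H122. \<forall>b \<in> H122. p = qmult a b \<longrightarrow> H_unit a \<or> H_unit b)"

definition I_ideal :: "quat set" where
  "I_ideal = {qmult (qscale 2 (qadd qone qi)) x | x. x \<in> H122}"

definition primary :: "quat \<Rightarrow> bool" where
  "primary q \<longleftrightarrow> q \<in> H122 \<and>
     (qsub q qone \<in> I_ideal \<or> qsub q (qadd qone (qscale 2 v3)) \<in> I_ideal)"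

definition pconj :: "quat \<Rightarrow> quat" where
  "pconj q = (if qsub q qone \<in> I_ideal then qconj q else qneg (qconj q))"

end

theory Submission
  imports Defs
begin

text \<open>
  Indeed
  N(c + 2(1+i)x) = N(c) + 4 Re(c conj((1+i)x)) + 8 N(x), and both the norm and the
  trace form Re(c conj((1+i)x)) take integer values on H_{1,2,2}. It remains to note that
  N(1) = 1 and N(1 + 2 v3) = 7.
\<close>

lemma qnorm_eq_sum_squares: "qnorm q = (Re q)\<^sup>2 + (Im1 q)\<^sup>2 + (Im2 q)\<^sup>2 + (Im3 q)\<^sup>2"
  by (simp add: qnorm_def qmult_def qconj_def power2_eq_square)

lemma qnorm_qadd: "qnorm (qadd a b) = qnorm a + qnorm b + 2 * Re (qmult a (qconj b))"
  by (simp add: qnorm_eq_sum_squares qadd_def qmult_def qconj_def power2_eq_square algebra_simps)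

lemma qnorm_qmult: "qnorm (qmult a b) = qnorm a * qnorm b"
  by (simp add: qnorm_eq_sum_squares qmult_def power2_eq_square algebra_simps)

lemma qadd_qsub_cancel: "qadd c (qsub q c) = q"
  by (simp add: qadd_def qsub_def)

definition H122_comb :: "int \<Rightarrow> int \<Rightarrow> int \<Rightarrow> int \<Rightarrow> quat" where
  "H122_comb a b c d = Quat (a + (c + d) / 2) (b + (c + d) / 2) (c * sqrt 2 / 2) (d * sqrt 2 / 2)"

lemma H122_eq: "H122 = {H122_comb a b c d | a b c d. True}"
proof -
  have "qadd (qadd (qscale (of_int a) v1) (qscale (of_int b) v2))
             (qadd (qscale (of_int c) v3) (qscale (of_int d) v4)) = H122_comb a b c d" for a b c d
    by (simp add: H122_comb_def qadd_def qscale_def v1_def v2_def v3_def v4_def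
        qone_def qi_def qj_def qk_def)
  then show ?thesis
    unfolding H122_def by simp
qed

lemma H122_comb_in_H122: "H122_comb a b c d \<in> H122"
  unfolding H122_eq by blast

lemma H122_cases:
  assumes "x \<in> H122"
  obtains a b c d where "x = H122_comb a b c d"
  using assms unfolding H122_eq by blast

lemma qnorm_H122_Ints:
  assumes "x \<in> H122"
  shows "qnorm x \<in> \<int>"
proof -
  obtain e f g h where x: "x = H122_comb e f g h"
    using assms by (rule H122_cases)
  have "qnorm x = of_int (e*e + f*f + (e + f) * (g + h) + g*g + h*h + g*h)"
    by (simp add: x H122_comb_def qnorm_eq_sum_squares power2_eq_square field_simps)
  then show ?thesis by simp
qed

lemma Re_mult_conj_one_plus_i_H122_Ints:
  assumes "a \<in> H122" and "x \<in> H122"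
  shows "Re (qmult a (qconj (qmult (qadd qone qi) x))) \<in> \<int>"
proof -
  obtain A B C D where a: "a = H122_comb A B C D"
    using assms(1) by (rule H122_cases)
  obtain e f g h where x: "x = H122_comb e f g h"
    using assms(2) by (rule H122_cases)
  have "Re (qmult a (qconj (qmult (qadd qone qi) x)))
      = of_int (A * (e - f) + B * (e + f + g + h) + (C + D) * e + C * g + D * g + D * h)"
    by (simp add: a x H122_comb_def qmult_def qconj_def qadd_def qone_def qi_def field_simps)
  then show ?thesis by simp
qed

lemma qnorm_cong_mod_I:
  assumes "c \<in> H122" and "qsub q c \<in> I_ideal"
  obtains K :: int where "qnorm q = qnorm c + 4 * of_int K"
proof -
  from assms(2) obtain x where x: "x \<in> H122"
    and qc: "qsub q c = qmult (qscale 2 (qadd qone qi)) x"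
    unfolding I_ideal_def by blast
  obtain n :: int where n: "Re (qmult c (qconj (qmult (qadd qone qi) x))) = of_int n"
    using Re_mult_conj_one_plus_i_H122_Ints[OF assms(1) x] by (elim Ints_cases)
  obtain m :: int where m: "qnorm x = of_int m"
    using qnorm_H122_Ints[OF x] by (elim Ints_cases)
  have "Re (qmult c (qconj (qmult (qscale 2 (qadd qone qi)) x)))
      = 2 * Re (qmult c (qconj (qmult (qadd qone qi) x)))"
    by (simp add: qmult_def qconj_def qscale_def algebra_simps)
  moreover have "qnorm (qscale 2 (qadd qone qi)) = 8"
    by (simp add: qnorm_eq_sum_squares qscale_def qadd_def qone_def qi_def)
  moreover have "q = qadd c (qmult (qscale 2 (qadd qone qi)) x)"
    using qadd_qsub_cancel[of c q] qc by simp
  ultimately have "qnorm q = qnorm c + 4 * of_int (n + 2 * m)"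
    using n m by (simp add: qnorm_qadd qnorm_qmult)
  then show thesis by (rule that)
qed

lemma qnorm_cong_1_mod_4:
  assumes "qsub q qone \<in> I_ideal" and "qnorm q = of_int p"
  shows "[p = 1] (mod 4)"
proof -
  have "qone = H122_comb 1 0 0 0"
    by (simp add: H122_comb_def qone_def)
  then obtain K :: int where "qnorm q = qnorm qone + 4 * of_int K"
    using qnorm_cong_mod_I H122_comb_in_H122 assms(1) by metis
  with assms(2) have "p = 1 + 4 * K"
    by (simp add: qnorm_eq_sum_squares qone_def flip: of_int_eq_iff)
  then show ?thesis by (simp add: cong_iff_dvd_diff)
qed

lemma qnorm_cong_3_mod_4:
  assumes "qsub q (qadd qone (qscale 2 v3)) \<in> I_ideal" and "qnorm q = of_int p"
  shows "[p = 3] (mod 4)"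
proof -
  have "qadd qone (qscale 2 v3) = H122_comb 1 0 2 0"
    by (simp add: H122_comb_def qadd_def qscale_def v3_def qone_def qi_def qj_def)
  then obtain K :: int where "qnorm q = qnorm (qadd qone (qscale 2 v3)) + 4 * of_int K"
    using qnorm_cong_mod_I H122_comb_in_H122 assms(1) by metis
  moreover have "qnorm (qadd qone (qscale 2 v3)) = 7"
    by (simp add: qnorm_eq_sum_squares qadd_def qscale_def v3_def qone_def qi_def qj_def
        power2_eq_square algebra_simps)
  ultimately have "p = 3 + 4 * (K + 1)"
    using assms(2) by (simp flip: of_int_eq_iff)
  then show ?thesis by (simp add: cong_iff_dvd_diff)
qed

theorem lemma50:
  fixes \<pi> :: quat and p :: int
  assumes "H_prime \<pi>" and "primary \<pi>"
    and "qnorm \<pi> = of_int p"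
  shows "([p = 1] (mod 4) \<longrightarrow> pconj \<pi> = qconj \<pi>)
       \<and> ([p = - 1] (mod 4) \<longrightarrow> pconj \<pi> = qneg (qconj \<pi>))"
proof (cases "qsub \<pi> qone \<in> I_ideal")
  case True
  then have "[p = 1] (mod 4)" using assms(3) by (rule qnorm_cong_1_mod_4)
  then have "\<not> [p = - 1] (mod 4)" unfolding cong_def by presburger
  then show ?thesis using True by (simp add: pconj_def)
next
  case False
  then have "qsub \<pi> (qadd qone (qscale 2 v3)) \<in> I_ideal"
    using assms(2) by (simp add: primary_def)
  then have "[p = 3] (mod 4)" using assms(3) by (rule qnorm_cong_3_mod_4)
  then have "\<not> [p = 1] (mod 4)" unfolding cong_def by presburger
  then show ?thesis using False by (simp add: pconj_def)
qed

end
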